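(* Let $L$ be a component of a $T^*$-colored link diagram whose labels lie in $\{\pm i,\pm j,\pm k\}\cup\{\tfrac{1\pm i\pm j\pm k}{2}\}$. For a basepoint $b$ on an arc of $L$, let $n$ be the order of $\chi(b)$ and let $Q'(L,b)\in\mathbb{Z}_n$ be the exponent with $q(L,b)=\chi(b)^{Q'(L,b)}$. Then $Q'(L,b)$ does not depend on the choice of the basepoint $b$ on $L$.
   Context: $T^*=\{\pm1,\pm i,\pm j,\pm k,\tfrac{\pm1\pm i\pm j\pm k}{2}\}$ is the binary tetrahedral group (unit quaternions, all sign combinations). A $T^*$-colored link diagram is an oriented diagram of a tame link $\mathcal L\subset\mathbb{R}^3$ together with a homomorphism $\phi:\pi_1(\mathbb{R}^3\setminus\mathcal L)\to T^*$, in which each arc carries the label $\phi(m_a)$ of its Wirtinger meridian (with respect to a basepoint above the projection plane and the orientation of the arc); $\chi(b)$ denotes the label of the arc containing $b$. All labels on a component are conjugate, and all labels on $L$ have the same order $n$. At each crossing $c$ where a component passes under an over-arc with label $g$, with incoming under-arc label $x$ and outgoing label $x'$, the Wirtinger relation $x'=g^{\varepsilon_c}xg^{-\varepsilon_c}$ holds, $\varepsilon_c\in\{\pm1\}$ determined by the sign of the crossing. Traversing $L$ from $b$ along its orientation, let $c_1,\dots,c_m$ be the successive crossings where $L$ passes under an arc whose label is not $-1$, with over-arc labels $g_1,\dots,g_m$, and set $q(L,b)=g_m^{\varepsilon_{c_m}}\cdots g_1^{\varepsilon_{c_1}}$. For such $\chi(b)$, $q(L,b)$ is a power of $\chi(b)$,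 so $Q'(L,b)$ (the discrete logarithm of $q(L,b)$ to base $\chi(b)$) is a well-defined element of $\mathbb{Z}_n$. *)

theory Defs
  imports Complex_Main
begin

datatype quat = Quat real real real real

fun qmul :: "quat \<Rightarrow> quat \<Rightarrow> quat" where
  "qmul (Quat a1 b1 c1 d1) (Quat a2 b2 c2 d2) =
     Quat (a1*a2 - b1*b2 - c1*c2 - d1*d2)
          (a1*b2 + b1*a2 + c1*d2 - d1*c2)
          (a1*c2 - b1*d2 + c1*a2 + d1*b2)
          (a1*d2 + b1*c2 - c1*b2 + d1*a2)"

definition qone :: quat where "qone = Quat 1 0 0 0"

fun qinv :: "quat \<Rightarrow> quat" where
  "qinv (Quat a b c d) =
     (let n = a^2 + b^2 + c^2 + d^2 in Quat (a/n) (-b/n) (-c/n) (-d/n))"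

primrec qpow :: "quat \<Rightarrow> nat \<Rightarrow> quat" where
  "qpow x 0 = qone"
| "qpow x (Suc n) = qmul x (qpow x n)"

definition qpow_int :: "quat \<Rightarrow> int \<Rightarrow> quat" where
  "qpow_int x e = (if 0 \<le> e then qpow x (nat e) else qpow (qinv x) (nat (- e)))"

definition qord :: "quat \<Rightarrow> nat" where
  "qord x = (LEAST n. 0 < n \<and> qpow x n = qone)"

definition Tstar :: "quat set" where
  "Tstar = {Quat s 0 0 0 | s. s \<in> {1, -1}} \<union> {Quat 0 s 0 0 | s. s \<in> {1, -1}}
         \<union> {Quat 0 0 s 0 | s. s \<in> {1, -1}} \<union> {Quat 0 0 0 s | s. s \<in> {1, -1}}
         \<union> {Quat a b c d | a b c d. a \<in> {1/2, -1/2} \<and> b \<in> {1/2, -1/2}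
                                     \<and> c \<in> {1/2, -1/2} \<and> d \<in> {1/2, -1/2}}"

definition good_labels :: "quat set" where
  "good_labels = {Quat 0 s 0 0 | s. s \<in> {1, -1}}
         \<union> {Quat 0 0 s 0 | s. s \<in> {1, -1}} \<union> {Quat 0 0 0 s | s. s \<in> {1, -1}}
         \<union> {Quat (1/2) b c d | b c d. b \<in> {1/2, -1/2}
                                     \<and> c \<in> {1/2, -1/2} \<and> d \<in> {1/2, -1/2}}"

text \<open>A diagram is given by finite sets of arcs and crossings; each crossing \<open>c\<close>
  has an over-arc \<open>over c\<close>, an incoming under-arc \<open>inc c\<close>, an outgoing under-arc
  \<open>out c\<close> and a sign \<open>eps c \<in> {1,-1}\<close>.  Each arc ends at (is the incoming under-arc of)
  at most one crossing and starts at (is the outgoing under-arc of) at most one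
  crossing, and it ends at one iff it starts at one (arcs without undercrossings are
  closed loops).  A \<open>T*\<close>-coloring \<open>\<chi>\<close> is a labelling of arcs by elements of \<open>T*\<close>
  satisfying the Wirtinger relation at every crossing; by the Wirtinger presentation
  these are exactly the homomorphisms \<open>\<pi>\<^sub>1(\<real>\<^sup>3 - L) \<rightarrow> T*\<close>.\<close>

definition colored_diagram ::
  "'a set \<Rightarrow> 'c set \<Rightarrow> ('c \<Rightarrow> 'a) \<Rightarrow> ('c \<Rightarrow> 'a) \<Rightarrow> ('c \<Rightarrow> 'a) \<Rightarrow> ('c \<Rightarrow> int)
     \<Rightarrow> ('a \<Rightarrow> quat) \<Rightarrow> bool" where
  "colored_diagram A C over inc out eps \<chi> \<longleftrightarrow>
     finite A \<and> finite C \<and>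
     (\<forall>c\<in>C. over c \<in> A \<and> inc c \<in> A \<and> out c \<in> A \<and> eps c \<in> {1, -1}) \<and>
     (\<forall>c\<in>C. \<forall>c'\<in>C. inc c = inc c' \<longrightarrow> c = c') \<and>
     (\<forall>c\<in>C. \<forall>c'\<in>C. out c = out c' \<longrightarrow> c = c') \<and>
     (\<forall>a\<in>A. (\<exists>c\<in>C. inc c = a) \<longleftrightarrow> (\<exists>c\<in>C. out c = a)) \<and>
     (\<forall>a\<in>A. \<chi> a \<in> Tstar) \<and>
     (\<forall>c\<in>C. \<chi> (out c) = qmul (qmul (qpow_int (\<chi> (over c)) (eps c)) (\<chi> (inc c)))
                                  (qpow_int (\<chi> (over c)) (- eps c)))"

text \<open>A component \<open>L\<close> of the diagram, given by its arcs \<open>as ! 0, \<dots>, as ! (m-1)\<close> in the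
  order of its orientation together with the successive crossings \<open>cs ! t\<close> at which
  it passes under (\<open>cs ! t\<close> leads from arc \<open>as ! t\<close> to arc \<open>as ! ((t+1) mod m)\<close>);
  or a single arc with no undercrossing at all.\<close>

definition is_component ::
  "'a set \<Rightarrow> 'c set \<Rightarrow> ('c \<Rightarrow> 'a) \<Rightarrow> ('c \<Rightarrow> 'a) \<Rightarrow> 'a list \<Rightarrow> 'c list \<Rightarrow> bool" where
  "is_component A C inc out as cs \<longleftrightarrow>
     as \<noteq> [] \<and> distinct as \<and> set as \<subseteq> A \<and>
     ((length cs = length as \<and> distinct cs \<and> set cs \<subseteq> C \<and>
        (\<forall>t<length as. inc (cs ! t) = as ! t \<and> out (cs ! t) = as ! ((t + 1) mod length as)))
      \<or> (cs = [] \<and> length as = 1 \<and> (\<forall>c\<in>C. inc c \<noteq> as ! 0)))"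

text \<open>\<open>q(L,b)\<close> for a basepoint on the arc \<open>as ! s\<close>: traverse the undercrossings
  \<open>cs ! s, cs ! (s+1), \<dots>\<close> (cyclically), skip those whose over-arc is labelled \<open>-1\<close>,
  and multiply \<open>g\<^sub>m\<^bsup>\<epsilon>\<^sub>m\<^esup> \<cdots> g\<^sub>1\<^bsup>\<epsilon>\<^sub>1\<^esup>\<close> (later factors on the left).\<close>

definition qLb :: "('c \<Rightarrow> 'a) \<Rightarrow> ('c \<Rightarrow> int) \<Rightarrow> ('a \<Rightarrow> quat) \<Rightarrow> 'c list \<Rightarrow> nat \<Rightarrow> quat" where
  "qLb over eps \<chi> cs s =
     foldl (\<lambda>acc c. qmul (qpow_int (\<chi> (over c)) (eps c)) acc) qone
       (filter (\<lambda>c. \<chi> (over c) \<noteq> Quat (-1) 0 0 0) (rotate s cs))"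

text \<open>\<open>Q'(L,b) \<in> \<int>\<^sub>n\<close>, represented by its residue in \<open>{0..<n}\<close>, \<open>n\<close> the order of \<open>\<chi>(b)\<close>.\<close>

definition Q' :: "('c \<Rightarrow> 'a) \<Rightarrow> ('c \<Rightarrow> int) \<Rightarrow> ('a \<Rightarrow> quat) \<Rightarrow> 'a list \<Rightarrow> 'c list \<Rightarrow> nat \<Rightarrow> nat" where
  "Q' over eps \<chi> as cs s =
     (THE e. e < qord (\<chi> (as ! s)) \<and> qpow (\<chi> (as ! s)) e = qLb over eps \<chi> cs s)"

end

theory Submission
  imports Defs
begin

text \<open>Moving the basepoint across the undercrossing \<open>c\<close> (over-arc label \<open>g\<close>, sign \<open>\<epsilon>\<close>)
  replaces \<open>\<chi>(b)\<close> by \<open>g\<^sup>\<epsilon> \<chi>(b) g\<^sup>-\<^sup>\<epsilon>\<close> (Wirtinger relation) and cyclically rotates the word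
  defining \<open>q(L,b)\<close>, which replaces \<open>q(L,b)\<close> by \<open>g\<^sup>\<epsilon> q(L,b) g\<^sup>-\<^sup>\<epsilon>\<close>; when \<open>g = -1\<close> the factor
  is skipped, but \<open>-1\<close> is central, so this still holds.  A simultaneous conjugation of
  base and power leaves the order and the discrete logarithm unchanged, and going
  once around \<open>L\<close> connects any two basepoints.  The restriction on the labels only
  guarantees that \<open>q(L,b)\<close> is a power of \<open>\<chi>(b)\<close>; the invariance argument does not need it.\<close>

lemma qmul_assoc: "qmul (qmul x y) z = qmul x (qmul y z)"
  by (cases x; cases y; cases z) (simp add: algebra_simps)

lemma qmul_qone_right [simp]: "qmul x qone = x"
  by (cases x) (simp add: qone_def)

lemma qmul_qone_left [simp]: "qmul qone x = x"
  by (cases x) (simp add: qone_def)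

lemma qmul_qinv:
  assumes "a\<^sup>2 + b\<^sup>2 + c\<^sup>2 + d\<^sup>2 \<noteq> 0"
  shows "qmul (Quat a b c d) (qinv (Quat a b c d)) = qone"
    and "qmul (qinv (Quat a b c d)) (Quat a b c d) = qone"
proof -
  define r where "r = inverse (a\<^sup>2 + b\<^sup>2 + c\<^sup>2 + d\<^sup>2)"
  have "qinv (Quat a b c d) = Quat (a * r) (- (b * r)) (- (c * r)) (- (d * r))"
    by (simp add: r_def Let_def divide_inverse)
  moreover have "(a\<^sup>2 + b\<^sup>2 + c\<^sup>2 + d\<^sup>2) * r = 1"
    using assms by (simp add: r_def)
  then have "a * a * r + b * b * r + c * c * r + d * d * r = 1"
    by (simp add: power2_eq_square algebra_simps)
  ultimately show "qmul (Quat a b c d) (qinv (Quat a b c d)) = qone"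
    and "qmul (qinv (Quat a b c d)) (Quat a b c d) = qone"
    by (simp_all add: qone_def algebra_simps)
qed

lemma Tstar_norm:
  assumes "Quat a b c d \<in> Tstar"
  shows "a\<^sup>2 + b\<^sup>2 + c\<^sup>2 + d\<^sup>2 = 1"
proof -
  have half_sq: "x * x = 1 / 4" if "x * 2 = 1" for x :: real
  proof -
    from that have "x = 1 / 2" by linarith
    then show ?thesis by (simp only:)
  qed
  from assms show ?thesis
    unfolding Tstar_def
    by (elim UnE CollectE exE conjE) (auto simp: power2_eq_square half_sq)
qed

lemma Tstar_qinv:
  assumes "g \<in> Tstar"
  shows "qmul g (qinv g) = qone" and "qmul (qinv g) g = qone"
proof -
  obtain a b c d where g: "g = Quat a b c d" by (cases g)
  with assms have "a\<^sup>2 + b\<^sup>2 + c\<^sup>2 + d\<^sup>2 \<noteq> 0" by (simp add: Tstar_norm)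
  from qmul_qinv [OF this] show "qmul g (qinv g) = qone" and "qmul (qinv g) g = qone"
    unfolding g by blast+
qed

lemma qpow_int_sign_inverse:
  assumes "g \<in> Tstar" and "e \<in> {1, -1}"
  shows "qmul (qpow_int g e) (qpow_int g (- e)) = qone"
    and "qmul (qpow_int g (- e)) (qpow_int g e) = qone"
  using assms Tstar_qinv [OF assms(1)] by (auto simp: qpow_int_def)

lemma qmul_minus_one_central: "qmul (qmul (Quat (-1) 0 0 0) x) (Quat (-1) 0 0 0) = x"
  by (cases x) simp

context
  fixes h k :: quat
  assumes hk: "qmul h k = qone" and kh: "qmul k h = qone"
begin

lemma qpow_conj: "qpow (qmul (qmul h x) k) n = qmul (qmul h (qpow x n)) k"
proof (induction n)
  case 0
  show ?case using hk by simp
next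
  case (Suc n)
  have "qpow (qmul (qmul h x) k) (Suc n) = qmul (qmul (qmul h x) k) (qmul (qmul h (qpow x n)) k)"
    using Suc.IH by simp
  also have "\<dots> = qmul (qmul h (qmul x (qmul (qmul k h) (qpow x n)))) k"
    by (simp add: qmul_assoc)
  finally show ?case using kh by simp
qed

lemma conj_eq_iff: "qmul (qmul h x) k = qmul (qmul h y) k \<longleftrightarrow> x = y"
proof
  have undo: "qmul (qmul k (qmul (qmul h z) k)) h = z" for z
    using hk kh by (simp add: qmul_assoc flip: qmul_assoc [of k h])
  assume "qmul (qmul h x) k = qmul (qmul h y) k"
  then show "x = y" using undo [of x] undo [of y] by metis
qed simp

lemma qord_conj: "qord (qmul (qmul h x) k) = qord x"
proof -
  have "qmul (qmul h qone) k = qone" using hk by simp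
  then show ?thesis
    unfolding qord_def qpow_conj by (metis conj_eq_iff)
qed

lemma discrete_log_conj:
  "(THE e. e < qord (qmul (qmul h x) k) \<and> qpow (qmul (qmul h x) k) e = qmul (qmul h q) k)
   = (THE e. e < qord x \<and> qpow x e = q)"
  by (simp add: qord_conj qpow_conj conj_eq_iff)

end

lemma foldl_qmul_left_acc:
  "foldl (\<lambda>acc c. qmul (f c) acc) acc xs = qmul (foldl (\<lambda>acc c. qmul (f c) acc) qone xs) acc"
proof (induction xs arbitrary: acc rule: rev_induct)
  case Nil
  show ?case by simp
next
  case (snoc x xs)
  have "foldl (\<lambda>acc c. qmul (f c) acc) acc (xs @ [x])
      = qmul (f x) (qmul (foldl (\<lambda>acc c. qmul (f c) acc) qone xs) acc)"
    using snoc.IH [of acc] by simp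
  then show ?case by (simp add: qmul_assoc)
qed

lemma rotate_Suc_nth:
  assumes "s < length xs"
  shows "rotate s xs = xs ! s # tl (rotate s xs)"
    and "rotate (Suc s) xs = tl (rotate s xs) @ [xs ! s]"
proof -
  have "xs \<noteq> []" using assms by auto
  then have "rotate s xs \<noteq> []" and "hd (rotate s xs) = xs ! s"
    using assms by (simp_all add: hd_rotate_conv_nth)
  then show first: "rotate s xs = xs ! s # tl (rotate s xs)"
    by (metis list.collapse)
  show "rotate (Suc s) xs = tl (rotate s xs) @ [xs ! s]"
    by (subst rotate_Suc, subst first) simp
qed

lemma qLb_rotate_step:
  fixes over :: "'c \<Rightarrow> 'a" and eps :: "'c \<Rightarrow> int" and \<chi> :: "'a \<Rightarrow> quat"
    and cs :: "'c list" and s :: nat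
  defines "g \<equiv> \<chi> (over (cs ! s))" and "e \<equiv> eps (cs ! s)"
  assumes s: "s < length cs" and g: "g \<in> Tstar" and e: "e \<in> {1, -1}"
  shows "qLb over eps \<chi> cs (Suc s mod length cs)
           = qmul (qmul (qpow_int g e) (qLb over eps \<chi> cs s)) (qpow_int g (- e))"
proof -
  define F where "F = tl (rotate s cs)"
  define f where "f c = qpow_int (\<chi> (over c)) (eps c)" for c
  define keep where "keep c \<longleftrightarrow> \<chi> (over c) \<noteq> Quat (-1) 0 0 0" for c
  define prod where "prod xs = foldl (\<lambda>acc c. qmul (f c) acc) qone xs" for xs
  have rot: "rotate s cs = cs ! s # F" "rotate (Suc s mod length cs) cs = F @ [cs ! s]"
    unfolding F_def by (metis rotate_Suc_nth [OF s] rotate_conv_mod)+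
  have qLb: "qLb over eps \<chi> cs s = prod (filter keep (cs ! s # F))"
    "qLb over eps \<chi> cs (Suc s mod length cs) = prod (filter keep (F @ [cs ! s]))"
    unfolding qLb_def rot prod_def f_def keep_def by simp_all
  show ?thesis
  proof (cases "keep (cs ! s)")
    case True
    have "prod (filter keep (cs ! s # F)) = qmul (prod (filter keep F)) (qpow_int g e)"
      using True foldl_qmul_left_acc [of f "f (cs ! s)"]
      by (simp add: prod_def f_def g_def e_def)
    moreover have "prod (filter keep (F @ [cs ! s])) = qmul (qpow_int g e) (prod (filter keep F))"
      using True by (simp add: prod_def f_def g_def e_def)
    moreover have "qmul (qpow_int g e) (qpow_int g (- e)) = qone"
      using qpow_int_sign_inverse [OF g e] by simp
    ultimately show ?thesis
      unfolding qLb by (simp add: qmul_assoc)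
  next
    case False
    then have "qpow_int g e = Quat (-1) 0 0 0" "qpow_int g (- e) = Quat (-1) 0 0 0"
      using e by (auto simp: keep_def g_def qpow_int_def qone_def)
    then show ?thesis
      using False unfolding qLb by (simp add: qmul_minus_one_central)
  qed
qed

lemma Q'_rotate_step:
  assumes diagram: "colored_diagram A C over inc out eps \<chi>"
    and len: "length cs = length as" and cs: "set cs \<subseteq> C"
    and arcs: "\<forall>t<length as. inc (cs ! t) = as ! t \<and> out (cs ! t) = as ! ((t + 1) mod length as)"
    and s: "s < length as"
  shows "Q' over eps \<chi> as cs (Suc s mod length as) = Q' over eps \<chi> as cs s"
proof -
  define c where "c = cs ! s"
  define h where "h = qpow_int (\<chi> (over c)) (eps c)"
  define k where "k = qpow_int (\<chi> (over c)) (- eps c)"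
  have "c \<in> C" using cs s len unfolding c_def by auto
  then have g: "\<chi> (over c) \<in> Tstar" and e: "eps c \<in> {1, -1}"
    and wirtinger: "\<chi> (out c) = qmul (qmul h (\<chi> (inc c))) k"
    using diagram unfolding colored_diagram_def h_def k_def by blast+
  have hk: "qmul h k = qone" "qmul k h = qone"
    using qpow_int_sign_inverse [OF g e] unfolding h_def k_def by blast+
  have "\<chi> (as ! (Suc s mod length as)) = qmul (qmul h (\<chi> (as ! s))) k"
    using wirtinger arcs s unfolding c_def by simp
  moreover have "qLb over eps \<chi> cs (Suc s mod length as) = qmul (qmul h (qLb over eps \<chi> cs s)) k"
    using qLb_rotate_step [of s cs] g e s len unfolding h_def k_def c_def by simp
  ultimately show ?thesis
    unfolding Q'_def by (simp add: discrete_log_conj [OF hk])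
qed

lemma eq_zero_if_invariant_Suc_mod:
  assumes step: "\<And>t. t < n \<Longrightarrow> f (Suc t mod n) = f t" and "s < n"
  shows "f s = f 0"
  using \<open>s < n\<close>
proof (induction s)
  case 0
  show ?case by simp
next
  case (Suc s)
  then show ?case using step [of s] by simp
qed

theorem mainTheorem3:
  fixes A :: "'a set" and C :: "'c set"
    and over inc out :: "'c \<Rightarrow> 'a" and eps :: "'c \<Rightarrow> int" and \<chi> :: "'a \<Rightarrow> quat"
    and as :: "'a list" and cs :: "'c list" and s s' :: nat
  assumes "colored_diagram A C over inc out eps \<chi>"
    and "is_component A C inc out as cs"
    and "\<forall>a\<in>set as. \<chi> a \<in> good_labels"
    and "s < length as" and "s' < length as"
  shows "Q' over eps \<chi> as cs s = Q' over eps \<chi> as cs s'"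
proof (cases "length as = 1")
  case True
  then show ?thesis using assms(4,5) by simp
next
  case False
  with assms(2) have "length cs = length as" "set cs \<subseteq> C"
    "\<forall>t<length as. inc (cs ! t) = as ! t \<and> out (cs ! t) = as ! ((t + 1) mod length as)"
    unfolding is_component_def by auto
  then have "\<And>t. t < length as \<Longrightarrow>
      Q' over eps \<chi> as cs (Suc t mod length as) = Q' over eps \<chi> as cs t"
    using Q'_rotate_step [OF assms(1)] by blast
  then show ?thesis
    using eq_zero_if_invariant_Suc_mod assms(4,5) by metis
qed

end
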